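(* Let $A\in\mathbb{R}^{K\times M}$, $\boldsymbol\beta\in\mathbb{R}^K$, $C>0$, with $\mathcal F_0=\{\mathbf w\in\mathbb{R}^M:A\mathbf w=\boldsymbol\beta,\ \mathbf 0\le\mathbf w\le C\mathbf 1\}$ nonempty. Let $\hat A_n,\hat{\boldsymbol\beta}_n$ be random with $\max_{i,j}|\hat A_{n,ij}-A_{ij}|=O_p(n^{-1/2})$ and $\|\hat{\boldsymbol\beta}_n-\boldsymbol\beta\|_\infty=O_p(n^{-1/2})$, let $\hat m_n=\min_{\mathbf 0\le\mathbf w\le C\mathbf 1}\|\hat A_n\mathbf w-\hat{\boldsymbol\beta}_n\|_\infty$, and for a deterministic sequence $\kappa_n>0$ let $\mathcal F_n=\{\mathbf w:\|\hat A_n\mathbf w-\hat{\boldsymbol\beta}_n\|_\infty\le\kappa_n/\sqrt n+\hat m_n,\ \mathbf 0\le\mathbf w\le C\mathbf 1\}$. Then: (i) if $\kappa_n\to\infty$ and $\kappa_n/\sqrt n\to0$, then $d_H(\mathcal F_n,\mathcal F_0)=O_p(\kappa_n/\sqrt n)$; (ii) if $A$ has full column rank and $\kappa_n$ is bounded, then $d_H(\mathcal F_n,\mathcal F_0)=O_p(n^{-1/2})$.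
   Context: For sets $S,T\subseteq\mathbb{R}^M$, the Hausdorff distance is $d_H(S,T)=\max\{\sup_{s\in S}\mathrm{dist}(s,T),\sup_{t\in T}\mathrm{dist}(t,S)\}$ with $\mathrm{dist}(u,T)=\inf_{v\in T}\|u-v\|_2$. $\|\cdot\|_\infty$ is the maximum absolute entry of a vector. *)

theory Defs
  imports "HOL-Analysis.Analysis" "HOL-Probability.Probability"
begin

definition hausd :: "'a::metric_space set \<Rightarrow> 'a set \<Rightarrow> real" where
  "hausd S T = max (SUP s\<in>S. infdist s T) (SUP t\<in>T. infdist t S)"

definition outer_prob :: "'a measure \<Rightarrow> 'a set \<Rightarrow> real" where
  "outer_prob P S = Inf {measure P T | T. T \<in> sets P \<and> S \<inter> space P \<subseteq> T}"

definition bigOp :: "'a measure \<Rightarrow> (nat \<Rightarrow> 'a \<Rightarrow> real) \<Rightarrow> (nat \<Rightarrow> real) \<Rightarrow> bool" where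
  "bigOp P X r \<longleftrightarrow> (\<forall>\<epsilon>>0. \<exists>B>0. \<exists>N. \<forall>n\<ge>N.
      outer_prob P {\<omega>\<in>space P. \<bar>X n \<omega>\<bar> > B * r n} < \<epsilon>)"

definition box0C :: "real \<Rightarrow> (real^'m) set" where
  "box0C C = {w. \<forall>i. 0 \<le> w$i \<and> w$i \<le> C}"

definition feas0 :: "real^'m^'k \<Rightarrow> real^'k \<Rightarrow> real \<Rightarrow> (real^'m) set" where
  "feas0 A \<beta> C = {w \<in> box0C C. A *v w = \<beta>}"

definition mhat :: "real^'m^'k \<Rightarrow> real^'k \<Rightarrow> real \<Rightarrow> real" where
  "mhat A b C = Inf ((\<lambda>w. infnorm (A *v w - b)) ` box0C C)"

definition feasn :: "real^'m^'k \<Rightarrow> real^'k \<Rightarrow> real \<Rightarrow> real \<Rightarrow> (real^'m) set" where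
  "feasn A b C t = {w \<in> box0C C. infnorm (A *v w - b) \<le> t + mhat A b C}"

end

(*
  F0 is a polyhedron, so Hoffman's error bound gives infdist w F0 <= H * ||A w - beta||_inf on
  the box. Hoffman's bound comes from projecting x onto the polyhedron: x - p lies in the cone
  of the active constraint normals (Farkas), and a Caratheodory-type elimination represents it
  with coefficients of total mass at most c * ||x - p||, whence ||x - p||^2 <= c * e * ||x - p||
  when every constraint is violated by at most e.

  On the box the residuals of the estimated and true systems differ by at most
  E = m C ||Ahat - A|| + ||betahat - beta||, which is O_p(n^(-1/2)). Every point of Fn therefore
  has true residual at most t + 2E, and F0 is contained in Fn as soon as E <= t. In case (i)
  E is eventually below t = kappa_n / sqrt n because kappa_n tends to infinity; in case (ii) F0 is
  a single point, so its distance to Fn is bounded by the distance of any point of Fn to F0.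
*)
theory Submission
  imports Defs
begin

section \<open>Hoffman's error bound\<close>

definition bounded_conic_rep :: "'a::euclidean_space set \<Rightarrow> real \<Rightarrow> bool" where
  "bounded_conic_rep S c \<longleftrightarrow> c \<ge> 0 \<and> (\<forall>\<mu>. (\<forall>s\<in>S. \<mu> s \<ge> 0) \<longrightarrow> (\<exists>\<nu>. (\<forall>s\<in>S. \<nu> s \<ge> 0) \<and>
      (\<Sum>s\<in>S. \<nu> s *\<^sub>R s) = (\<Sum>s\<in>S. \<mu> s *\<^sub>R s) \<and>
      sum \<nu> S \<le> c * norm (\<Sum>s\<in>S. \<mu> s *\<^sub>R s)))"

lemma bounded_conic_repD:
  assumes "bounded_conic_rep S c" "\<forall>s\<in>S. \<mu> s \<ge> 0"
  shows "\<exists>\<nu>. (\<forall>s\<in>S. \<nu> s \<ge> 0) \<and> (\<Sum>s\<in>S. \<nu> s *\<^sub>R s) = (\<Sum>s\<in>S. \<mu> s *\<^sub>R s) \<and>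
      sum \<nu> S \<le> c * norm (\<Sum>s\<in>S. \<mu> s *\<^sub>R s)"
  using assms unfolding bounded_conic_rep_def by blast

lemma bounded_conic_rep_mono:
  assumes "bounded_conic_rep S c" "c \<le> c'"
  shows "bounded_conic_rep S c'"
proof -
  have "c \<ge> 0" using assms(1) unfolding bounded_conic_rep_def by (rule conjunct1)
  then have "c' \<ge> 0" using assms(2) by linarith
  moreover have "\<exists>\<nu>. (\<forall>s\<in>S. \<nu> s \<ge> 0) \<and> (\<Sum>s\<in>S. \<nu> s *\<^sub>R s) = (\<Sum>s\<in>S. \<mu> s *\<^sub>R s) \<and>
      sum \<nu> S \<le> c' * norm (\<Sum>s\<in>S. \<mu> s *\<^sub>R s)" if \<mu>: "\<forall>s\<in>S. \<mu> s \<ge> 0" for \<mu>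
  proof -
    obtain \<nu> where "\<forall>s\<in>S. \<nu> s \<ge> 0" "(\<Sum>s\<in>S. \<nu> s *\<^sub>R s) = (\<Sum>s\<in>S. \<mu> s *\<^sub>R s)"
      "sum \<nu> S \<le> c * norm (\<Sum>s\<in>S. \<mu> s *\<^sub>R s)"
      using bounded_conic_repD[OF assms(1) \<mu>] by blast
    moreover have "c * norm (\<Sum>s\<in>S. \<mu> s *\<^sub>R s) \<le> c' * norm (\<Sum>s\<in>S. \<mu> s *\<^sub>R s)"
      using assms(2) by (rule mult_right_mono) simp
    ultimately show ?thesis by (intro exI[of _ \<nu>]) simp
  qed
  ultimately show ?thesis unfolding bounded_conic_rep_def by blast
qed

lemma bounded_conic_rep_if_0_notin_convex_hull:
  fixes S :: "'a::euclidean_space set"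
  assumes "finite S" "0 \<notin> convex hull S"
  shows "\<exists>c. bounded_conic_rep S c"
proof -
  have "closed (convex hull S)"
    using assms(1) by (simp add: compact_imp_closed finite_imp_compact_convex_hull)
  then obtain m where m: "m > 0" "\<And>x. x \<in> convex hull S \<Longrightarrow> m \<le> norm x"
    using separate_point_closed[OF _ assms(2)] by (metis dist_0_norm)
  have "sum \<mu> S \<le> 1/m * norm (\<Sum>s\<in>S. \<mu> s *\<^sub>R s)" if \<mu>: "\<forall>s\<in>S. 0 \<le> \<mu> s" for \<mu>
  proof (cases "sum \<mu> S = 0")
    case False
    then have \<sigma>: "sum \<mu> S > 0" using \<mu> by (simp add: order_less_le sum_nonneg)
    \<comment> \<open>normalising \<mu> gives a point of the convex hull, which is at distance at least m from 0\<close>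
    have "(\<Sum>s\<in>S. (\<mu> s / sum \<mu> S) *\<^sub>R s) \<in> convex hull S"
      unfolding convex_hull_finite[OF assms(1)]
      using \<mu> \<sigma> by (auto intro!: exI[of _ "\<lambda>s. \<mu> s / sum \<mu> S"] simp: sum_divide_distrib[symmetric])
    then have "m \<le> norm ((1 / sum \<mu> S) *\<^sub>R (\<Sum>s\<in>S. \<mu> s *\<^sub>R s))"
      using m(2) by (simp add: scaleR_sum_right divide_inverse_commute)
    then show ?thesis using m(1) \<sigma> by (simp add: field_simps)
  qed (use m in simp)
  then show ?thesis
    using m(1) unfolding bounded_conic_rep_def by (intro exI[of _ "1/m"]) auto
qed

lemma conic_rep_drop_vector:
  fixes S :: "'a::euclidean_space set"
  assumes "finite S" and \<theta>: "\<forall>s\<in>S. 0 \<le> \<theta> s" "sum \<theta> S = 1" "(\<Sum>s\<in>S. \<theta> s *\<^sub>R s) = 0"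
    and \<mu>: "\<forall>s\<in>S. 0 \<le> \<mu> s"
  shows "\<exists>s0\<in>S. \<exists>\<mu>'. (\<forall>s\<in>S - {s0}. 0 \<le> \<mu>' s) \<and>
           (\<Sum>s\<in>S - {s0}. \<mu>' s *\<^sub>R s) = (\<Sum>s\<in>S. \<mu> s *\<^sub>R s)"
proof -
  define T where "T = {s\<in>S. \<theta> s > 0}"
  have "T \<noteq> {}"
  proof
    assume "T = {}"
    then have "\<forall>s\<in>S. \<theta> s = 0" using \<theta>(1) unfolding T_def by force
    then show False using \<theta>(2) by simp
  qed
  moreover have "finite T" using assms(1) unfolding T_def by simp
  ultimately have "Min ((\<lambda>s. \<mu> s / \<theta> s) ` T) \<in> (\<lambda>s. \<mu> s / \<theta> s) ` T"
    and "\<And>s. s \<in> T \<Longrightarrow> Min ((\<lambda>s. \<mu> s / \<theta> s) ` T) \<le> \<mu> s / \<theta> s"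
    by simp_all
  then obtain s0 where s0: "s0 \<in> T" "\<And>s. s \<in> T \<Longrightarrow> \<mu> s0 / \<theta> s0 \<le> \<mu> s / \<theta> s"
    by force
  define t where "t = \<mu> s0 / \<theta> s0"
  define \<mu>' where "\<mu>' = (\<lambda>s. \<mu> s - t * \<theta> s)"
  \<comment> \<open>t is the largest multiple of \<theta> that can be subtracted from \<mu> keeping it nonnegative\<close>
  have \<mu>'_nonneg: "0 \<le> \<mu>' s" if "s \<in> S" for s
  proof (cases "\<theta> s > 0")
    case True
    then show ?thesis using s0(2)[of s] that unfolding \<mu>'_def t_def T_def by (simp add: field_simps)
  next
    case False
    then have "\<theta> s = 0" using \<theta>(1) that by force
    then show ?thesis using \<mu> that unfolding \<mu>'_def by simp
  qed
  have s0S: "s0 \<in> S" using s0(1) unfolding T_def by simp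
  have "\<mu>' s0 = 0" using s0(1) unfolding \<mu>'_def t_def T_def by simp
  then have "(\<Sum>s\<in>S - {s0}. \<mu>' s *\<^sub>R s) = (\<Sum>s\<in>S. \<mu>' s *\<^sub>R s)"
    by (simp add: sum.remove[OF assms(1) s0S])
  also have "\<dots> = (\<Sum>s\<in>S. \<mu> s *\<^sub>R s) - t *\<^sub>R (\<Sum>s\<in>S. \<theta> s *\<^sub>R s)"
    unfolding \<mu>'_def by (simp add: scaleR_diff_left sum_subtractf scaleR_sum_right)
  finally have "(\<Sum>s\<in>S - {s0}. \<mu>' s *\<^sub>R s) = (\<Sum>s\<in>S. \<mu> s *\<^sub>R s)"
    using \<theta>(3) by simp
  then show ?thesis using \<mu>'_nonneg s0S by blast
qed

lemma bounded_conic_rep_exists: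
  fixes S :: "'a::euclidean_space set"
  assumes "finite S"
  shows "\<exists>c. bounded_conic_rep S c"
  using assms
proof (induction "card S" arbitrary: S rule: less_induct)
  case less
  show ?case
  proof (cases "0 \<in> convex hull S")
    case False
    then show ?thesis using bounded_conic_rep_if_0_notin_convex_hull less.prems by blast
  next
    case True
    then obtain \<theta> where \<theta>: "\<forall>s\<in>S. 0 \<le> \<theta> s" "sum \<theta> S = 1" "(\<Sum>s\<in>S. \<theta> s *\<^sub>R s) = 0"
      unfolding convex_hull_finite[OF less.prems] by blast
    have "\<exists>c. bounded_conic_rep (S - {s}) c" if "s \<in> S" for s
      using less.prems that by (intro less.hyps[of "S - {s}"] card_Diff1_less) auto
    then obtain c where c: "\<And>s. s \<in> S \<Longrightarrow> bounded_conic_rep (S - {s}) (c s)"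
      by metis
    define c' where "c' = Max (c ` S)"
    have "S \<noteq> {}" using \<theta>(2) by auto
    then have c': "bounded_conic_rep (S - {s}) c'" if "s \<in> S" for s
      using bounded_conic_rep_mono[OF c[OF that]] less.prems that unfolding c'_def by simp
    have "\<exists>\<nu>. (\<forall>s\<in>S. \<nu> s \<ge> 0) \<and> (\<Sum>s\<in>S. \<nu> s *\<^sub>R s) = (\<Sum>s\<in>S. \<mu> s *\<^sub>R s) \<and>
            sum \<nu> S \<le> c' * norm (\<Sum>s\<in>S. \<mu> s *\<^sub>R s)" if \<mu>: "\<forall>s\<in>S. 0 \<le> \<mu> s" for \<mu>
    proof -
      obtain s0 \<mu>' where s0: "s0 \<in> S" and \<mu>': "\<forall>s\<in>S - {s0}. 0 \<le> \<mu>' s"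
        "(\<Sum>s\<in>S - {s0}. \<mu>' s *\<^sub>R s) = (\<Sum>s\<in>S. \<mu> s *\<^sub>R s)"
        using conic_rep_drop_vector[OF less.prems \<theta> \<mu>] by blast
      then obtain \<nu> where \<nu>: "\<forall>s\<in>S - {s0}. 0 \<le> \<nu> s"
        "(\<Sum>s\<in>S - {s0}. \<nu> s *\<^sub>R s) = (\<Sum>s\<in>S. \<mu> s *\<^sub>R s)"
        "sum \<nu> (S - {s0}) \<le> c' * norm (\<Sum>s\<in>S. \<mu> s *\<^sub>R s)"
        using bounded_conic_repD[OF c'[OF s0] \<mu>'(1)] \<mu>'(2) by auto
      have "(\<Sum>s\<in>S. (\<nu>(s0 := 0)) s *\<^sub>R s) = (\<Sum>s\<in>S - {s0}. \<nu> s *\<^sub>R s)"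
           "sum (\<nu>(s0 := 0)) S = sum \<nu> (S - {s0})"
        using s0 less.prems by (simp_all add: sum.remove)
      then show ?thesis using \<nu> by (intro exI[of _ "\<nu>(s0 := 0)"]) auto
    qed
    moreover have "c' \<ge> 0" using c' \<open>S \<noteq> {}\<close> unfolding bounded_conic_rep_def by blast
    ultimately show ?thesis unfolding bounded_conic_rep_def by blast
  qed
qed

lemma bounded_conic_rep_uniform:
  fixes T :: "'a::euclidean_space set"
  assumes "finite T"
  obtains c where "\<And>S. S \<subseteq> T \<Longrightarrow> bounded_conic_rep S c"
proof -
  have "\<forall>S\<in>Pow T. \<exists>c. bounded_conic_rep S c"
    using assms by (auto intro: bounded_conic_rep_exists finite_subset)
  then obtain c where c: "\<And>S. S \<subseteq> T \<Longrightarrow> bounded_conic_rep S (c S)"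
    using finite_set_choice[of "Pow T"] assms by (metis Pow_iff finite_Pow_iff)
  have "bounded_conic_rep S (Max (c ` Pow T))" if "S \<subseteq> T" for S
    using assms that by (intro bounded_conic_rep_mono[OF c[OF that]]) auto
  then show ?thesis by (rule that)
qed

definition polyhedron_of :: "('a::real_inner \<times> real) set \<Rightarrow> 'a set" where
  "polyhedron_of I = {x. \<forall>(a, b)\<in>I. inner a x \<le> b}"

lemma closed_polyhedron_of: "closed (polyhedron_of (I :: ('a::real_inner \<times> real) set))"
proof -
  have "polyhedron_of I = (\<Inter>(a, b)\<in>I. {x. inner a x \<le> b})"
    unfolding polyhedron_of_def by auto
  then show ?thesis by (auto intro!: closed_INT closed_halfspace_le)
qed

lemma convex_polyhedron_of: "convex (polyhedron_of (I :: ('a::real_inner \<times> real) set))"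
proof -
  have "polyhedron_of I = (\<Inter>(a, b)\<in>I. {x. inner a x \<le> b})"
    unfolding polyhedron_of_def by auto
  then show ?thesis by (auto intro!: convex_INT convex_halfspace_le)
qed

lemma farkas_finite_cone:
  fixes S :: "'a::euclidean_space set"
  assumes "finite S" "v \<notin> convex_cone hull S"
  obtains d where "inner d v > 0" "\<And>s. s \<in> S \<Longrightarrow> inner s d \<le> 0"
proof -
  obtain a b where ab: "inner a v < b" "\<forall>z\<in>convex_cone hull S. b < inner a z"
    using separating_hyperplane_closed_point[OF convex_convex_cone_hull
        closed_convex_cone_hull[OF assms(1)] assms(2)] by blast
  have b: "b < 0" using ab(2) convex_cone_hull_contains_0 by fastforce
  \<comment> \<open>a positive multiple of s with negative inner product with a would fall below the level b\<close>
  have "inner a s \<ge> 0" if "s \<in> S" for s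
  proof (rule ccontr)
    assume neg: "\<not> inner a s \<ge> 0"
    have "(b / inner a s) *\<^sub>R s \<in> convex_cone hull S"
      using convex_cone_hull_mul[of s S "b / inner a s"] hull_subset[of S convex_cone] that b neg
      by (auto simp: divide_nonpos_neg)
    then have "b < inner a ((b / inner a s) *\<^sub>R s)" using ab(2) by blast
    then show False using neg by simp
  qed
  then show ?thesis using ab(1) b that[of "- a"] by (auto simp: inner_commute)
qed

lemma polyhedron_feasible_direction:
  fixes I :: "('a::euclidean_space \<times> real) set"
  assumes "finite I" "p \<in> polyhedron_of I"
    and active: "\<And>a b. (a, b) \<in> I \<Longrightarrow> inner a p = b \<Longrightarrow> inner a d \<le> 0"
  obtains \<tau> where "\<tau> > 0" "p + \<tau> *\<^sub>R d \<in> polyhedron_of I"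
proof -
  define J where "J = {(a, b)\<in>I. inner a p \<noteq> b}"
  \<comment> \<open>the inactive constraints have positive slack, so a small step keeps them\<close>
  define \<tau> where "\<tau> = Min (insert 1 ((\<lambda>(a, b). (b - inner a p) / (\<bar>inner a d\<bar> + 1)) ` J))"
  have slack: "inner a p < b" if "(a, b) \<in> J" for a b
    using that assms(2) unfolding J_def polyhedron_of_def by fastforce
  have "finite J" using assms(1) unfolding J_def by (rule rev_finite_subset) auto
  then have \<tau>: "\<tau> > 0" "\<And>a b. (a, b) \<in> J \<Longrightarrow> \<tau> \<le> (b - inner a p) / (\<bar>inner a d\<bar> + 1)"
    unfolding \<tau>_def using slack by (auto simp: add_pos_nonneg intro!: Min.coboundedI rev_image_eqI)
  have "inner a (p + \<tau> *\<^sub>R d) \<le> b" if "(a, b) \<in> I" for a b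
  proof (cases "inner a p = b")
    case True
    then show ?thesis using active[OF that] \<tau>(1) by (simp add: inner_add_right mult_nonneg_nonpos)
  next
    case False
    then have "\<tau> * (\<bar>inner a d\<bar> + 1) \<le> b - inner a p"
      using \<tau>(2)[of a b] that unfolding J_def by (simp add: pos_le_divide_eq add_pos_nonneg)
    moreover have "\<tau> * inner a d \<le> \<tau> * (\<bar>inner a d\<bar> + 1)"
      using \<tau>(1) by (intro mult_left_mono) auto
    ultimately show ?thesis by (simp add: inner_add_right)
  qed
  then show ?thesis using that[OF \<tau>(1)] unfolding polyhedron_of_def by blast
qed

lemma polyhedron_normal_in_active_cone:
  fixes I :: "('a::euclidean_space \<times> real) set"
  assumes "finite I" "p \<in> polyhedron_of I"
    and normal: "\<And>y. y \<in> polyhedron_of I \<Longrightarrow> inner v (y - p) \<le> 0"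
  shows "v \<in> convex_cone hull {a. \<exists>b. (a, b) \<in> I \<and> inner a p = b}"
proof (rule ccontr)
  let ?S = "{a. \<exists>b. (a, b) \<in> I \<and> inner a p = b}"
  have "?S \<subseteq> fst ` I" by (auto intro: rev_image_eqI)
  then have "finite ?S" using assms(1) by (rule finite_subset[OF _ finite_imageI])
  moreover assume "v \<notin> convex_cone hull ?S"
  ultimately obtain d where d: "inner d v > 0" "\<And>s. s \<in> ?S \<Longrightarrow> inner s d \<le> 0"
    using farkas_finite_cone by blast
  have "inner a d \<le> 0" if "(a, b) \<in> I" "inner a p = b" for a b
    using that by (intro d(2)) blast
  then obtain \<tau> where \<tau>: "\<tau> > 0" "p + \<tau> *\<^sub>R d \<in> polyhedron_of I"
    by (rule polyhedron_feasible_direction[OF assms(1,2)])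
  have "inner v ((p + \<tau> *\<^sub>R d) - p) > 0"
    using d(1) \<tau>(1) by (simp add: inner_commute)
  then show False using normal[OF \<tau>(2)] by linarith
qed

lemma convex_cone_hull_finite_nonneg_comb:
  fixes S :: "'a::euclidean_space set"
  assumes "finite S" "v \<in> convex_cone hull S"
  obtains \<mu> where "\<forall>s\<in>S. \<mu> s \<ge> 0" "v = (\<Sum>s\<in>S. \<mu> s *\<^sub>R s)"
proof (cases "v = 0")
  case True
  then show ?thesis using that[of "\<lambda>_. 0"] by simp
next
  case False
  then obtain x c where "x \<in> convex hull S" "c \<ge> 0" "v = c *\<^sub>R x"
    using assms(2) unfolding convex_cone_hull_convex_hull by auto
  moreover from \<open>x \<in> convex hull S\<close> obtain u where "\<forall>s\<in>S. 0 \<le> u s" "x = (\<Sum>s\<in>S. u s *\<^sub>R s)"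
    unfolding convex_hull_finite[OF assms(1)] by auto
  ultimately show ?thesis
    using that[of "\<lambda>s. c * u s"] by (auto simp: scaleR_sum_right)
qed

lemma hoffman_error_bound:
  fixes I :: "('a::euclidean_space \<times> real) set"
  assumes "finite I" "polyhedron_of I \<noteq> {}"
  obtains H where "H \<ge> 0"
    "\<And>x e. e \<ge> 0 \<Longrightarrow> (\<And>a b. (a, b) \<in> I \<Longrightarrow> inner a x - b \<le> e) \<Longrightarrow>
      infdist x (polyhedron_of I) \<le> H * e"
proof -
  obtain H where H: "\<And>S. S \<subseteq> fst ` I \<Longrightarrow> bounded_conic_rep S H"
    using bounded_conic_rep_uniform[OF finite_imageI[OF assms(1)]] by blast
  have "H \<ge> 0" using H[of "{}"] unfolding bounded_conic_rep_def by (simp only: empty_subsetI simp_thms)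
  moreover have "infdist x (polyhedron_of I) \<le> H * e"
    if e: "e \<ge> 0" and viol: "\<And>a b. (a, b) \<in> I \<Longrightarrow> inner a x - b \<le> e" for x e
  proof -
    let ?P = "polyhedron_of I"
    define p where "p = closest_point ?P x"
    define v where "v = x - p"
    let ?S = "{a. \<exists>b. (a, b) \<in> I \<and> inner a p = b}"
    have p: "p \<in> ?P" "\<forall>y\<in>?P. dist x p \<le> dist x y"
      unfolding p_def using closest_point_exists[OF closed_polyhedron_of assms(2)] by blast+
    then have "inner v (y - p) \<le> 0" if "y \<in> ?P" for y
      unfolding v_def using any_closest_point_dot[OF convex_polyhedron_of closed_polyhedron_of p(1) that] by blast
    then have "v \<in> convex_cone hull ?S"
      by (rule polyhedron_normal_in_active_cone[OF assms(1) p(1)])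
    moreover have S: "?S \<subseteq> fst ` I" "finite ?S"
      using assms(1) by (auto intro: rev_image_eqI finite_subset[OF _ finite_imageI])
    ultimately obtain \<mu> where \<mu>: "\<forall>s\<in>?S. \<mu> s \<ge> 0" "v = (\<Sum>s\<in>?S. \<mu> s *\<^sub>R s)"
      using convex_cone_hull_finite_nonneg_comb by blast
    obtain \<nu> where \<nu>: "\<forall>s\<in>?S. \<nu> s \<ge> 0" "v = (\<Sum>s\<in>?S. \<nu> s *\<^sub>R s)" "sum \<nu> ?S \<le> H * norm v"
      using bounded_conic_repD[OF H[OF S(1)] \<mu>(1)] unfolding \<mu>(2)[symmetric] by blast
    \<comment> \<open>each active constraint is violated by at most e at x, i.e. has inner product at most e with v\<close>
    have "inner s v \<le> e" if "s \<in> ?S" for s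
      using that viol unfolding v_def by (force simp: inner_diff_right)
    then have "norm v ^ 2 \<le> (\<Sum>s\<in>?S. \<nu> s * e)"
      unfolding power2_norm_eq_inner using \<nu>(1)
      by (subst (1) \<nu>(2)) (auto simp: inner_sum_left intro!: sum_mono mult_left_mono)
    also have "\<dots> \<le> H * norm v * e"
      using \<nu>(3) e by (simp add: sum_distrib_right[symmetric] mult_right_mono)
    finally have "norm v \<le> H * e"
      by (cases "norm v = 0") (use \<open>H \<ge> 0\<close> e in \<open>auto simp: power2_eq_square\<close>)
    moreover have "infdist x ?P \<le> norm v"
      using infdist_le[OF p(1)] unfolding v_def by (simp add: dist_norm)
    ultimately show ?thesis by linarith
  qed
  ultimately show ?thesis by (rule that)
qed

section \<open>The feasible region and its perturbation\<close>

lemma matrix_vector_mult_nth_inner: "(A *v x) $ k = inner (A $ k) (x :: real^'m)"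
  by (simp add: matrix_vector_mult_def inner_vec_def mult.commute)

lemma infnorm_cart_le: "(\<And>i. \<bar>x $ i\<bar> \<le> c) \<Longrightarrow> infnorm (x :: real^'n) \<le> c"
  unfolding infnorm_cart by (rule cSup_least) auto

lemma abs_matrix_nth_le_infnorm: "\<bar>(M :: real^'m^'k) $ k $ j\<bar> \<le> infnorm M"
proof -
  have "axis k (axis j 1) \<in> (Basis :: (real^'m^'k) set)"
    by (auto simp: Basis_vec_def)
  from Basis_le_infnorm[OF this, of M] show ?thesis
    by (simp add: inner_axis)
qed

lemma infnorm_matrix_vector_mult_le:
  fixes M :: "real^'m^'k" and w :: "real^'m" and c :: real
  assumes "\<And>j. \<bar>w $ j\<bar> \<le> c"
  shows "infnorm (M *v w) \<le> CARD('m) * c * infnorm M"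
proof (rule infnorm_cart_le)
  fix k
  have "\<bar>(M *v w) $ k\<bar> \<le> (\<Sum>j\<in>UNIV. \<bar>M $ k $ j\<bar> * \<bar>w $ j\<bar>)"
    unfolding matrix_vector_mult_def by (simp add: order_trans[OF sum_abs] abs_mult)
  also have "\<dots> \<le> (\<Sum>j\<in>(UNIV :: 'm set). infnorm M * c)"
    using assms abs_matrix_nth_le_infnorm infnorm_pos_le[of M] by (intro sum_mono mult_mono) auto
  finally show "\<bar>(M *v w) $ k\<bar> \<le> CARD('m) * c * infnorm M" by (simp add: ac_simps)
qed

definition feas0_constraints :: "real^'m^'k \<Rightarrow> real^'k \<Rightarrow> real \<Rightarrow> ((real^'m) \<times> real) set" where
  "feas0_constraints A \<beta> C = range (\<lambda>i. (- axis i 1, 0)) \<union> range (\<lambda>i. (axis i 1, C))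
     \<union> range (\<lambda>k. (A $ k, \<beta> $ k)) \<union> range (\<lambda>k. (- A $ k, - \<beta> $ k))"

lemma feas0_eq_polyhedron_of: "feas0 A \<beta> C = polyhedron_of (feas0_constraints A \<beta> C)"
proof -
  have "A *v x = \<beta> \<longleftrightarrow> (\<forall>k. inner (A $ k) x \<le> \<beta> $ k \<and> inner (- A $ k) x \<le> - \<beta> $ k)" for x
    by (auto simp: vec_eq_iff matrix_vector_mult_nth_inner intro: order.antisym)
  then show ?thesis
    unfolding feas0_def box0C_def polyhedron_of_def feas0_constraints_def
    by (auto simp: inner_axis' ball_Un Ball_image_comp)
qed

lemma feas0_constraints_violation_le:
  assumes "w \<in> box0C C" "(a, b) \<in> feas0_constraints A \<beta> C"
  shows "inner a w - b \<le> infnorm (A *v w - \<beta>)"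
proof -
  let ?r = "infnorm (A *v w - \<beta>)"
  have row: "\<bar>inner (A $ k) w - \<beta> $ k\<bar> \<le> ?r" for k
    using component_le_infnorm_cart[of "A *v w - \<beta>" k] by (simp add: matrix_vector_mult_nth_inner)
  have box: "0 \<le> w $ i" "w $ i \<le> C" for i
    using assms(1) unfolding box0C_def by auto
  have "inner (- axis i 1) w - 0 \<le> ?r" "inner (axis i 1) w - C \<le> ?r"
    "inner (A $ k) w - \<beta> $ k \<le> ?r" "inner (- A $ k) w - - \<beta> $ k \<le> ?r" for i k
    using row[of k] box[of i] infnorm_pos_le[of "A *v w - \<beta>"] by (auto simp: inner_axis' abs_le_iff)
  then show ?thesis using assms(2) unfolding feas0_constraints_def by auto
qed

lemma feas0_error_bound:
  fixes A :: "real^'m^'k"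
  assumes "feas0 A \<beta> C \<noteq> {}"
  obtains H where "H \<ge> 0"
    "\<And>w. w \<in> box0C C \<Longrightarrow> infdist w (feas0 A \<beta> C) \<le> H * infnorm (A *v w - \<beta>)"
proof -
  have "finite (feas0_constraints A \<beta> C)" unfolding feas0_constraints_def by simp
  then obtain H where "H \<ge> 0" and H: "\<And>x e. e \<ge> 0 \<Longrightarrow>
      (\<And>a b. (a, b) \<in> feas0_constraints A \<beta> C \<Longrightarrow> inner a x - b \<le> e) \<Longrightarrow>
      infdist x (feas0 A \<beta> C) \<le> H * e"
    using hoffman_error_bound assms unfolding feas0_eq_polyhedron_of by blast
  show ?thesis
  proof (rule that[OF \<open>H \<ge> 0\<close>])
    fix w :: "real^'m" assume "w \<in> box0C C"
    then show "infdist w (feas0 A \<beta> C) \<le> H * infnorm (A *v w - \<beta>)"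
      by (intro H infnorm_pos_le feas0_constraints_violation_le)
  qed
qed

definition residual_perturbation :: "real \<Rightarrow> real^'m^'k \<Rightarrow> real^'k \<Rightarrow> real^'m^'k \<Rightarrow> real^'k \<Rightarrow> real" where
  "residual_perturbation C A \<beta> A' \<beta>' = real CARD('m) * C * infnorm (A' - A) + infnorm (\<beta>' - \<beta>)"

lemma abs_residual_diff_le:
  fixes A :: "real^'m^'k"
  assumes "w \<in> box0C C"
  shows "\<bar>infnorm (A' *v w - \<beta>') - infnorm (A *v w - \<beta>)\<bar> \<le> residual_perturbation C A \<beta> A' \<beta>'"
proof -
  have "\<bar>w $ j\<bar> \<le> C" for j using assms unfolding box0C_def by auto
  then have "infnorm ((A' - A) *v w) \<le> CARD('m) * C * infnorm (A' - A)"
    by (simp add: infnorm_matrix_vector_mult_le)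
  moreover have "(A' *v w - \<beta>') - (A *v w - \<beta>) = (A' - A) *v w + - (\<beta>' - \<beta>)"
    by (simp add: matrix_vector_mult_diff_rdistrib algebra_simps)
  then have "infnorm ((A' *v w - \<beta>') - (A *v w - \<beta>)) \<le> infnorm ((A' - A) *v w) + infnorm (\<beta>' - \<beta>)"
    using infnorm_triangle[of "(A' - A) *v w" "- (\<beta>' - \<beta>)"] by (simp only: infnorm_neg)
  ultimately show ?thesis
    using absdiff_infnorm[of "A' *v w - \<beta>'" "A *v w - \<beta>"] unfolding residual_perturbation_def by linarith
qed

lemma box0C_nonempty: "C \<ge> 0 \<Longrightarrow> box0C C \<noteq> {}"
  unfolding box0C_def by (auto intro: exI[of _ 0])

lemma mhat_le: "w \<in> box0C C \<Longrightarrow> mhat A b C \<le> infnorm (A *v w - b)"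
  unfolding mhat_def by (rule cINF_lower) (auto intro: bdd_belowI2[where m = 0] infnorm_pos_le)

lemma mhat_nonneg: "C \<ge> 0 \<Longrightarrow> mhat A b C \<ge> 0"
  unfolding mhat_def by (rule cINF_greatest[OF box0C_nonempty]) (auto intro: infnorm_pos_le)

lemma feasn_nonempty:
  assumes "C \<ge> 0" "t > 0"
  shows "feasn A b C t \<noteq> {}"
proof -
  have "mhat A b C < mhat A b C + t" using assms(2) by simp
  then obtain w where "w \<in> box0C C" "infnorm (A *v w - b) < mhat A b C + t"
    using cInf_lessD[of "(\<lambda>w. infnorm (A *v w - b)) ` box0C C"] box0C_nonempty[OF assms(1)]
    unfolding mhat_def by blast
  then show ?thesis unfolding feasn_def by (auto simp: add.commute)
qed

lemma mhat_le_residual_perturbation: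
  assumes "feas0 A \<beta> C \<noteq> {}"
  shows "mhat A' \<beta>' C \<le> residual_perturbation C A \<beta> A' \<beta>'"
proof -
  obtain w where "w \<in> box0C C" "A *v w = \<beta>" using assms unfolding feas0_def by blast
  then show ?thesis
    using mhat_le[of w C A' \<beta>'] abs_residual_diff_le[of w C A' \<beta>' A \<beta>] by (simp add: infnorm_0)
qed

lemma residual_le_if_mem_feasn:
  fixes A :: "real^'m^'k"
  assumes "feas0 A \<beta> C \<noteq> {}" "w \<in> feasn A' \<beta>' C t"
  shows "infnorm (A *v w - \<beta>) \<le> t + 2 * residual_perturbation C A \<beta> A' \<beta>'"
proof -
  have box: "w \<in> box0C C" and "infnorm (A' *v w - \<beta>') \<le> t + mhat A' \<beta>' C"
    using assms(2) unfolding feasn_def by auto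
  then show ?thesis
    using abs_le_D2[OF abs_residual_diff_le[of w C A' \<beta>' A \<beta>, OF box]]
      mhat_le_residual_perturbation[OF assms(1), of A' \<beta>']
    by linarith
qed

lemma feas0_subset_feasn:
  assumes "C \<ge> 0" "residual_perturbation C A \<beta> A' \<beta>' \<le> t"
  shows "feas0 A \<beta> C \<subseteq> feasn A' \<beta>' C t"
proof
  fix w assume "w \<in> feas0 A \<beta> C"
  then have "w \<in> box0C C" "A *v w = \<beta>" unfolding feas0_def by auto
  then show "w \<in> feasn A' \<beta>' C t"
    using abs_residual_diff_le[of w C A' \<beta>' A \<beta>] mhat_nonneg[OF assms(1), of A' \<beta>'] assms(2)
    unfolding feasn_def by (simp add: infnorm_0)
qed

lemma abs_hausd_le:
  assumes "S \<noteq> {}" "T \<noteq> {}" "\<And>s. s \<in> S \<Longrightarrow> infdist s T \<le> r" "\<And>t. t \<in> T \<Longrightarrow> infdist t S \<le> r"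
  shows "\<bar>hausd S T\<bar> \<le> r"
proof -
  have "(SUP s\<in>S. infdist s T) \<le> r" "(SUP t\<in>T. infdist t S) \<le> r"
    using assms by (auto intro: cSUP_least)
  moreover obtain s where "s \<in> S" using assms(1) by blast
  then have "infdist s T \<le> (SUP s\<in>S. infdist s T)"
    using assms(3) by (intro cSUP_upper bdd_aboveI2[where M = r])
  then have "0 \<le> (SUP s\<in>S. infdist s T)"
    using infdist_nonneg[of s T] by linarith
  ultimately show ?thesis unfolding hausd_def by auto
qed

context
  fixes A :: "real^'m^'k" and \<beta> :: "real^'k" and C H :: real
  assumes C: "C > 0" and feasible: "feas0 A \<beta> C \<noteq> {}" and "H \<ge> 0"
    and error_bound: "\<And>w. w \<in> box0C C \<Longrightarrow> infdist w (feas0 A \<beta> C) \<le> H * infnorm (A *v w - \<beta>)"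
begin

lemma infdist_feasn_feas0_le:
  assumes "w \<in> feasn A' \<beta>' C t"
  shows "infdist w (feas0 A \<beta> C) \<le> H * (t + 2 * residual_perturbation C A \<beta> A' \<beta>')"
proof -
  have "w \<in> box0C C" using assms unfolding feasn_def by blast
  then show ?thesis
    using error_bound[of w] residual_le_if_mem_feasn[OF feasible assms] mult_left_mono[OF _ \<open>H \<ge> 0\<close>]
    by (meson order_trans)
qed

lemma abs_hausd_feasn_feas0_le:
  assumes "t > 0" "residual_perturbation C A \<beta> A' \<beta>' \<le> t"
  shows "\<bar>hausd (feasn A' \<beta>' C t) (feas0 A \<beta> C)\<bar> \<le> 3 * H * t"
proof (rule abs_hausd_le[OF feasn_nonempty feasible])
  fix w assume "w \<in> feasn A' \<beta>' C t"
  then have "infdist w (feas0 A \<beta> C) \<le> H * (t + 2 * residual_perturbation C A \<beta> A' \<beta>')"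
    by (rule infdist_feasn_feas0_le)
  also have "\<dots> \<le> H * (3 * t)" using assms(2) \<open>H \<ge> 0\<close> by (intro mult_left_mono) auto
  finally show "infdist w (feas0 A \<beta> C) \<le> 3 * H * t" by simp
next
  fix w assume "w \<in> feas0 A \<beta> C"
  then have "w \<in> feasn A' \<beta>' C t" using feas0_subset_feasn[OF less_imp_le[OF C] assms(2)] by blast
  then show "infdist w (feasn A' \<beta>' C t) \<le> 3 * H * t"
    using \<open>H \<ge> 0\<close> assms(1) by simp
qed (use C assms(1) in auto)

lemma abs_hausd_feasn_feas0_le_if_inj:
  assumes "inj ((*v) A)" "t > 0"
  shows "\<bar>hausd (feasn A' \<beta>' C t) (feas0 A \<beta> C)\<bar> \<le> H * (t + 2 * residual_perturbation C A \<beta> A' \<beta>')"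
proof -
  \<comment> \<open>F0 is a single point, so its distance to Fn is at most that of any point of Fn to F0\<close>
  obtain w0 where "w0 \<in> feas0 A \<beta> C" using feasible by blast
  then have F0: "feas0 A \<beta> C = {w0}"
    using assms(1) unfolding feas0_def by (auto dest: injD)
  obtain w1 where w1: "w1 \<in> feasn A' \<beta>' C t"
    using feasn_nonempty[OF less_imp_le[OF C] assms(2)] by blast
  show ?thesis
  proof (rule abs_hausd_le[OF feasn_nonempty feasible])
    fix w assume "w \<in> feasn A' \<beta>' C t"
    then show "infdist w (feas0 A \<beta> C) \<le> H * (t + 2 * residual_perturbation C A \<beta> A' \<beta>')"
      by (rule infdist_feasn_feas0_le)
  next
    fix w assume "w \<in> feas0 A \<beta> C"
    then have "infdist w (feasn A' \<beta>' C t) \<le> infdist w1 (feas0 A \<beta> C)"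
      using infdist_le[OF w1, of w] F0 by (simp add: dist_commute)
    also have "\<dots> \<le> H * (t + 2 * residual_perturbation C A \<beta> A' \<beta>')"
      using w1 by (rule infdist_feasn_feas0_le)
    finally show "infdist w (feasn A' \<beta>' C t) \<le> H * (t + 2 * residual_perturbation C A \<beta> A' \<beta>')" .
  qed (use C assms(2) in auto)
qed

end

section \<open>Rates in outer probability\<close>

lemma outer_prob_le_measure:
  assumes "T \<in> sets P" "S \<inter> space P \<subseteq> T"
  shows "outer_prob P S \<le> measure P T"
  unfolding outer_prob_def using assms by (intro cInf_lower) (auto intro: bdd_belowI[of _ 0])

lemma outer_prob_lessE:
  assumes "outer_prob P S < e"
  obtains T where "T \<in> sets P" "S \<inter> space P \<subseteq> T" "measure P T < e"
proof -
  have "{measure P T | T. T \<in> sets P \<and> S \<inter> space P \<subseteq> T} \<noteq> {}" by blast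
  from cInf_lessD[OF this assms[unfolded outer_prob_def]] show ?thesis using that by blast
qed

lemma bigOp_dominated:
  assumes "bigOp P X r" "bigOp P Y r"
    and bound: "\<And>B1 B2. B1 > 0 \<Longrightarrow> B2 > 0 \<Longrightarrow> \<exists>B>0. \<exists>N. \<forall>n\<ge>N. \<forall>\<omega>\<in>space P.
       \<bar>X n \<omega>\<bar> \<le> B1 * r n \<longrightarrow> \<bar>Y n \<omega>\<bar> \<le> B2 * r n \<longrightarrow> \<bar>Z n \<omega>\<bar> \<le> B * s n"
  shows "bigOp P Z s"
  unfolding bigOp_def
proof (intro allI impI)
  fix \<epsilon> :: real assume "\<epsilon> > 0"
  then have "\<epsilon> / 2 > 0" by simp
  then obtain B1 N1 B2 N2 where "B1 > 0" "B2 > 0"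
    and X: "\<forall>n\<ge>N1. outer_prob P {\<omega>\<in>space P. \<bar>X n \<omega>\<bar> > B1 * r n} < \<epsilon> / 2"
    and Y: "\<forall>n\<ge>N2. outer_prob P {\<omega>\<in>space P. \<bar>Y n \<omega>\<bar> > B2 * r n} < \<epsilon> / 2"
    using assms(1,2) unfolding bigOp_def by blast
  then obtain B N where "B > 0" and Z: "\<forall>n\<ge>N. \<forall>\<omega>\<in>space P.
      \<bar>X n \<omega>\<bar> \<le> B1 * r n \<longrightarrow> \<bar>Y n \<omega>\<bar> \<le> B2 * r n \<longrightarrow> \<bar>Z n \<omega>\<bar> \<le> B * s n"
    using bound[OF \<open>B1 > 0\<close> \<open>B2 > 0\<close>] by blast
  have "outer_prob P {\<omega>\<in>space P. \<bar>Z n \<omega>\<bar> > B * s n} < \<epsilon>" if n: "n \<ge> max N (max N1 N2)" for n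
  proof -
    from n have "N \<le> n" "N1 \<le> n" "N2 \<le> n" by auto
    obtain T1 where T1: "T1 \<in> sets P" "{\<omega>\<in>space P. \<bar>X n \<omega>\<bar> > B1 * r n} \<inter> space P \<subseteq> T1"
      "measure P T1 < \<epsilon> / 2"
      using outer_prob_lessE[OF X[rule_format, OF \<open>N1 \<le> n\<close>]] by blast
    obtain T2 where T2: "T2 \<in> sets P" "{\<omega>\<in>space P. \<bar>Y n \<omega>\<bar> > B2 * r n} \<inter> space P \<subseteq> T2"
      "measure P T2 < \<epsilon> / 2"
      using outer_prob_lessE[OF Y[rule_format, OF \<open>N2 \<le> n\<close>]] by blast
    have "{\<omega>\<in>space P. \<bar>Z n \<omega>\<bar> > B * s n} \<inter> space P \<subseteq> T1 \<union> T2"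
    proof (rule subsetI, rule ccontr)
      fix \<omega> assume \<omega>: "\<omega> \<in> {\<omega>\<in>space P. \<bar>Z n \<omega>\<bar> > B * s n} \<inter> space P" and "\<omega> \<notin> T1 \<union> T2"
      then have "\<omega> \<in> space P" "B * s n < \<bar>Z n \<omega>\<bar>" by auto
      with \<open>\<omega> \<notin> T1 \<union> T2\<close> T1(2) T2(2) have "\<not> B1 * r n < \<bar>X n \<omega>\<bar>" "\<not> B2 * r n < \<bar>Y n \<omega>\<bar>"
        by blast+
      with \<open>\<omega> \<in> space P\<close> \<open>B * s n < \<bar>Z n \<omega>\<bar>\<close> show False using Z[rule_format, OF \<open>N \<le> n\<close>, of \<omega>] by linarith
    qed
    then have "outer_prob P {\<omega>\<in>space P. \<bar>Z n \<omega>\<bar> > B * s n} \<le> measure P (T1 \<union> T2)"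
      using T1(1) T2(1) by (intro outer_prob_le_measure) auto
    also have "\<dots> \<le> measure P T1 + measure P T2" using T1(1) T2(1) by (rule measure_Un_le)
    finally show ?thesis using T1(3) T2(3) by linarith
  qed
  then show "\<exists>B>0. \<exists>N. \<forall>n\<ge>N. outer_prob P {\<omega>\<in>space P. \<bar>Z n \<omega>\<bar> > B * s n} < \<epsilon>"
    using \<open>B > 0\<close> by (intro exI[of _ B] conjI exI[of _ "max N (max N1 N2)"] allI impI)
qed

lemma residual_perturbation_le_rate:
  fixes A :: "real^'m^'k" and C B1 B2 r :: real
  assumes "C \<ge> 0" "\<bar>infnorm (A' - A)\<bar> \<le> B1 * r" "\<bar>infnorm (\<beta>' - \<beta>)\<bar> \<le> B2 * r"
  shows "residual_perturbation C A \<beta> A' \<beta>' \<le> (CARD('m) * C * B1 + B2) * r"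
proof -
  have "real CARD('m) * C * infnorm (A' - A) \<le> real CARD('m) * C * (B1 * r)"
    using assms by (intro mult_left_mono) auto
  then show ?thesis using assms(3) unfolding residual_perturbation_def by (simp add: algebra_simps)
qed

lemma bigOp_hausd_feasn_feas0_diverging:
  fixes A :: "real^'m^'k" and Ahat :: "nat \<Rightarrow> 'w \<Rightarrow> real^'m^'k" and \<beta>hat :: "nat \<Rightarrow> 'w \<Rightarrow> real^'k"
  assumes "C > 0" "feas0 A \<beta> C \<noteq> {}"
    and "bigOp P (\<lambda>n \<omega>. infnorm (Ahat n \<omega> - A)) (\<lambda>n. 1 / sqrt n)"
    and "bigOp P (\<lambda>n \<omega>. infnorm (\<beta>hat n \<omega> - \<beta>)) (\<lambda>n. 1 / sqrt n)"
    and "\<And>n. \<kappa> n > 0" "filterlim \<kappa> at_top sequentially"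
  shows "bigOp P (\<lambda>n \<omega>. hausd (feasn (Ahat n \<omega>) (\<beta>hat n \<omega>) C (\<kappa> n / sqrt n)) (feas0 A \<beta> C))
           (\<lambda>n. \<kappa> n / sqrt n)"
proof (rule bigOp_dominated[OF assms(3,4)])
  obtain H where "H \<ge> 0" and H: "\<And>w. w \<in> box0C C \<Longrightarrow> infdist w (feas0 A \<beta> C) \<le> H * infnorm (A *v w - \<beta>)"
    using feas0_error_bound[OF assms(2)] by blast
  fix B1 B2 :: real assume "B1 > 0" "B2 > 0"
  define D where "D = real CARD('m) * C * B1 + B2"
  \<comment> \<open>once \<kappa> n exceeds D, the perturbation is below the slack \<kappa> n / sqrt n and F0 \<subseteq> Fn\<close>
  obtain N where N: "\<And>n. n \<ge> N \<Longrightarrow> D \<le> \<kappa> n"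
    using assms(6) unfolding filterlim_at_top eventually_sequentially by blast
  have "\<bar>hausd (feasn (Ahat n \<omega>) (\<beta>hat n \<omega>) C (\<kappa> n / sqrt n)) (feas0 A \<beta> C)\<bar>
      \<le> (3 * H + 1) * (\<kappa> n / sqrt n)"
    if "n \<ge> Suc N" "\<bar>infnorm (Ahat n \<omega> - A)\<bar> \<le> B1 * (1 / sqrt n)"
      "\<bar>infnorm (\<beta>hat n \<omega> - \<beta>)\<bar> \<le> B2 * (1 / sqrt n)" for n \<omega>
  proof -
    have "sqrt n > 0" using that(1) by simp
    then have t: "\<kappa> n / sqrt n > 0" using assms(5)[of n] by simp
    have "residual_perturbation C A \<beta> (Ahat n \<omega>) (\<beta>hat n \<omega>) \<le> D * (1 / sqrt n)"
      unfolding D_def using assms(1) that(2,3) by (intro residual_perturbation_le_rate) auto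
    also have "\<dots> \<le> \<kappa> n / sqrt n"
      using N[of n] that(1) \<open>sqrt n > 0\<close> by (simp add: divide_right_mono)
    finally have "\<bar>hausd (feasn (Ahat n \<omega>) (\<beta>hat n \<omega>) C (\<kappa> n / sqrt n)) (feas0 A \<beta> C)\<bar>
        \<le> 3 * H * (\<kappa> n / sqrt n)"
      using abs_hausd_feasn_feas0_le[OF assms(1,2) \<open>H \<ge> 0\<close> H t] by blast
    also have "\<dots> \<le> (3 * H + 1) * (\<kappa> n / sqrt n)" using t by (intro mult_right_mono) auto
    finally show ?thesis .
  qed
  then show "\<exists>B>0. \<exists>N. \<forall>n\<ge>N. \<forall>\<omega>\<in>space P.
    \<bar>infnorm (Ahat n \<omega> - A)\<bar> \<le> B1 * (1 / sqrt n) \<longrightarrow> \<bar>infnorm (\<beta>hat n \<omega> - \<beta>)\<bar> \<le> B2 * (1 / sqrt n) \<longrightarrow>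
    \<bar>hausd (feasn (Ahat n \<omega>) (\<beta>hat n \<omega>) C (\<kappa> n / sqrt n)) (feas0 A \<beta> C)\<bar> \<le> B * (\<kappa> n / sqrt n)"
    using \<open>H \<ge> 0\<close> by (intro exI[of _ "3 * H + 1"] conjI exI[of _ "Suc N"]) auto
qed

lemma bigOp_hausd_feasn_feas0_full_rank:
  fixes A :: "real^'m^'k" and Ahat :: "nat \<Rightarrow> 'w \<Rightarrow> real^'m^'k" and \<beta>hat :: "nat \<Rightarrow> 'w \<Rightarrow> real^'k"
  assumes "C > 0" "feas0 A \<beta> C \<noteq> {}"
    and "bigOp P (\<lambda>n \<omega>. infnorm (Ahat n \<omega> - A)) (\<lambda>n. 1 / sqrt n)"
    and "bigOp P (\<lambda>n \<omega>. infnorm (\<beta>hat n \<omega> - \<beta>)) (\<lambda>n. 1 / sqrt n)"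
    and "\<And>n. \<kappa> n > 0" "rank A = CARD('m)" "bounded (range \<kappa>)"
  shows "bigOp P (\<lambda>n \<omega>. hausd (feasn (Ahat n \<omega>) (\<beta>hat n \<omega>) C (\<kappa> n / sqrt n)) (feas0 A \<beta> C))
           (\<lambda>n. 1 / sqrt n)"
proof (rule bigOp_dominated[OF assms(3,4)])
  obtain H where "H \<ge> 0" and H: "\<And>w. w \<in> box0C C \<Longrightarrow> infdist w (feas0 A \<beta> C) \<le> H * infnorm (A *v w - \<beta>)"
    using feas0_error_bound[OF assms(2)] by blast
  have inj: "inj ((*v) A)" using assms(6) full_rank_injective by blast
  obtain K where "\<forall>x\<in>range \<kappa>. \<bar>x\<bar> \<le> K" using assms(7) unfolding bounded_iff real_norm_def by blast
  then have K: "\<kappa> n \<le> K" for n by (meson abs_le_D1 rangeI)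
  fix B1 B2 :: real assume "B1 > 0" "B2 > 0"
  define D where "D = real CARD('m) * C * B1 + B2"
  define B where "B = H * (K + 2 * D) + 1"
  have "\<bar>hausd (feasn (Ahat n \<omega>) (\<beta>hat n \<omega>) C (\<kappa> n / sqrt n)) (feas0 A \<beta> C)\<bar> \<le> B * (1 / sqrt n)"
    if "n \<ge> 1" "\<bar>infnorm (Ahat n \<omega> - A)\<bar> \<le> B1 * (1 / sqrt n)"
      "\<bar>infnorm (\<beta>hat n \<omega> - \<beta>)\<bar> \<le> B2 * (1 / sqrt n)" for n \<omega>
  proof -
    have "sqrt n > 0" using that(1) by simp
    then have t: "\<kappa> n / sqrt n > 0" using assms(5)[of n] by simp
    have "residual_perturbation C A \<beta> (Ahat n \<omega>) (\<beta>hat n \<omega>) \<le> D * (1 / sqrt n)"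
      unfolding D_def using assms(1) that(2,3) by (intro residual_perturbation_le_rate) auto
    moreover have "\<kappa> n / sqrt n \<le> K * (1 / sqrt n)"
      using K[of n] \<open>sqrt n > 0\<close> by (simp add: divide_right_mono)
    ultimately have slack: "\<kappa> n / sqrt n + 2 * residual_perturbation C A \<beta> (Ahat n \<omega>) (\<beta>hat n \<omega>)
        \<le> (K + 2 * D) * (1 / sqrt n)"
      unfolding distrib_right mult.assoc by linarith
    have "\<bar>hausd (feasn (Ahat n \<omega>) (\<beta>hat n \<omega>) C (\<kappa> n / sqrt n)) (feas0 A \<beta> C)\<bar>
        \<le> H * (\<kappa> n / sqrt n + 2 * residual_perturbation C A \<beta> (Ahat n \<omega>) (\<beta>hat n \<omega>))"
      by (rule abs_hausd_feasn_feas0_le_if_inj[OF assms(1,2) \<open>H \<ge> 0\<close> H inj t])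
    also have "\<dots> \<le> H * ((K + 2 * D) * (1 / sqrt n))"
      using slack \<open>H \<ge> 0\<close> by (rule mult_left_mono)
    also have "\<dots> \<le> B * (1 / sqrt n)"
      unfolding B_def using \<open>sqrt n > 0\<close> by (simp add: field_simps)
    finally show ?thesis .
  qed
  moreover have "B > 0"
  proof -
    have "D \<ge> 0" unfolding D_def using assms(1) \<open>B1 > 0\<close> \<open>B2 > 0\<close> by simp
    then have "K + 2 * D \<ge> 0" using K[of 0] assms(5)[of 0] by linarith
    then have "H * (K + 2 * D) \<ge> 0" using \<open>H \<ge> 0\<close> by simp
    then show ?thesis unfolding B_def by linarith
  qed
  ultimately show "\<exists>B>0. \<exists>N. \<forall>n\<ge>N. \<forall>\<omega>\<in>space P.
    \<bar>infnorm (Ahat n \<omega> - A)\<bar> \<le> B1 * (1 / sqrt n) \<longrightarrow> \<bar>infnorm (\<beta>hat n \<omega> - \<beta>)\<bar> \<le> B2 * (1 / sqrt n) \<longrightarrow>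
    \<bar>hausd (feasn (Ahat n \<omega>) (\<beta>hat n \<omega>) C (\<kappa> n / sqrt n)) (feas0 A \<beta> C)\<bar> \<le> B * (1 / sqrt n)"
    by (intro exI[of _ B] conjI exI[of _ 1]) auto
qed

theorem lemma4:
  fixes A :: "real^'m^'k" and \<beta> :: "real^'k" and C :: real
    and P :: "'w measure"
    and Ahat :: "nat \<Rightarrow> 'w \<Rightarrow> real^'m^'k" and \<beta>hat :: "nat \<Rightarrow> 'w \<Rightarrow> real^'k"
    and \<kappa> :: "nat \<Rightarrow> real"
  assumes "prob_space P"
    and "C > 0"
    and "feas0 A \<beta> C \<noteq> {}"
    and "\<And>n. Ahat n \<in> borel_measurable P"
    and "\<And>n. \<beta>hat n \<in> borel_measurable P"
    and "bigOp P (\<lambda>n \<omega>. infnorm (Ahat n \<omega> - A)) (\<lambda>n. 1 / sqrt n)"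
    and "bigOp P (\<lambda>n \<omega>. infnorm (\<beta>hat n \<omega> - \<beta>)) (\<lambda>n. 1 / sqrt n)"
    and "\<And>n. \<kappa> n > 0"
  shows "(filterlim \<kappa> at_top sequentially \<and> (\<lambda>n. \<kappa> n / sqrt n) \<longlonglongrightarrow> 0 \<longrightarrow>
           bigOp P (\<lambda>n \<omega>. hausd (feasn (Ahat n \<omega>) (\<beta>hat n \<omega>) C (\<kappa> n / sqrt n)) (feas0 A \<beta> C))
                   (\<lambda>n. \<kappa> n / sqrt n))
       \<and> (rank A = CARD('m) \<and> bounded (range \<kappa>) \<longrightarrow>
           bigOp P (\<lambda>n \<omega>. hausd (feasn (Ahat n \<omega>) (\<beta>hat n \<omega>) C (\<kappa> n / sqrt n)) (feas0 A \<beta> C))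
                   (\<lambda>n. 1 / sqrt n))"
  using bigOp_hausd_feasn_feas0_diverging[where \<kappa> = \<kappa>, OF assms(2,3,6,7,8)]
    bigOp_hausd_feasn_feas0_full_rank[where \<kappa> = \<kappa>, OF assms(2,3,6,7,8)]
  by blast

end
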